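(* Let $M$ be a smooth manifold with a smooth $\mathbb{C}^*$-action $\sigma_M:\mathbb{C}^*\times M\to M$. Then there is no smooth map $\tilde\sigma_M:\mathbb{CP}^1\times M\to M$ with $\tilde\sigma_M=\sigma_M$ on $\mathbb{C}^*\times M$, unless the action $\sigma_M$ is trivial (i.e. $\sigma_M(\xi,x)=x$ for all $\xi\in\mathbb{C}^*$, $x\in M$). *)

theory Defs
  imports "HOL-Analysis.Analysis"
begin

fun iter_dd :: "'a::real_normed_vector list \<Rightarrow> ('a \<Rightarrow> 'b::real_normed_vector) \<Rightarrow> 'a \<Rightarrow> 'b" where
  "iter_dd [] f = f"
| "iter_dd (v # vs) f = (\<lambda>x. vector_derivative (\<lambda>t. iter_dd vs f (x + t *\<^sub>R v)) (at 0))"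

definition smooth_on :: "'a::euclidean_space set \<Rightarrow> ('a \<Rightarrow> 'b::euclidean_space) \<Rightarrow> bool" where
  "smooth_on S f \<longleftrightarrow>
     (\<forall>vs. continuous_on S (iter_dd vs f) \<and>
       (\<forall>v. \<forall>x\<in>S. ((\<lambda>t::real. iter_dd vs f (x + t *\<^sub>R v))
                      has_vector_derivative iter_dd (v # vs) f x) (at 0)))"

definition smooth_manifold ::
  "'m::{t2_space, second_countable_topology} set \<Rightarrow> (('m \<Rightarrow> 'e::euclidean_space) \<times> 'm set) set \<Rightarrow> bool" where
  "smooth_manifold M A \<longleftrightarrow>
     M = \<Union> (snd ` A) \<and>
     (\<forall>(\<phi>, U)\<in>A. openin (top_of_set M) U \<and> open (\<phi> ` U) \<and>
                   homeomorphism U (\<phi> ` U) \<phi> (inv_into U \<phi>)) \<and>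
     (\<forall>(\<phi>, U)\<in>A. \<forall>(\<psi>, V)\<in>A. smooth_on (\<phi> ` (U \<inter> V)) (\<psi> \<circ> inv_into U \<phi>))"

text \<open>Smooth maps F : D \<rightarrow> M where D \<subseteq> \<complex> \<times> M is open (here D = \<complex> \<times> M or \<complex>* \<times> M),
  \<complex> \<times> M carrying the product manifold structure (identity chart on \<complex>).\<close>
definition smooth_map_CxM ::
  "'m::{t2_space, second_countable_topology} set \<Rightarrow> (('m \<Rightarrow> 'e::euclidean_space) \<times> 'm set) set
   \<Rightarrow> (complex \<times> 'm) set \<Rightarrow> (complex \<times> 'm \<Rightarrow> 'm) \<Rightarrow> bool" where
  "smooth_map_CxM M A D F \<longleftrightarrow>
     continuous_on D F \<and> F ` D \<subseteq> M \<and>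
     (\<forall>(\<phi>, U)\<in>A. \<forall>(\<psi>, V)\<in>A.
        smooth_on {(z, u). u \<in> \<phi> ` U \<and> (z, inv_into U \<phi> u) \<in> D \<and> F (z, inv_into U \<phi> u) \<in> V}
                  (\<lambda>(z, u). \<psi> (F (z, inv_into U \<phi> u))))"

definition smooth_Cstar_action ::
  "'m::{t2_space, second_countable_topology} set \<Rightarrow> (('m \<Rightarrow> 'e::euclidean_space) \<times> 'm set) set
   \<Rightarrow> (complex \<times> 'm \<Rightarrow> 'm) \<Rightarrow> bool" where
  "smooth_Cstar_action M A \<sigma> \<longleftrightarrow>
     smooth_map_CxM M A ((- {0}) \<times> M) \<sigma> \<and>
     (\<forall>x\<in>M. \<sigma> (1, x) = x) \<and>
     (\<forall>\<xi> \<eta> x. \<xi> \<noteq> 0 \<longrightarrow> \<eta> \<noteq> 0 \<longrightarrow> x \<in> M \<longrightarrow> \<sigma> (\<xi>, \<sigma> (\<eta>, x)) = \<sigma> (\<xi> * \<eta>, x))"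

text \<open>CP^1 is modelled as complex option (None = the point at infinity), with its
  standard atlas of two charts: z \<mapsto> z on CP^1 - {\<infinity>} and z \<mapsto> 1/z (\<infinity> \<mapsto> 0) on CP^1 - {0}.\<close>
definition smooth_CP1_map ::
  "'m::{t2_space, second_countable_topology} set \<Rightarrow> (('m \<Rightarrow> 'e::euclidean_space) \<times> 'm set) set
   \<Rightarrow> (complex option \<times> 'm \<Rightarrow> 'm) \<Rightarrow> bool" where
  "smooth_CP1_map M A F \<longleftrightarrow>
     smooth_map_CxM M A (UNIV \<times> M) (\<lambda>(z, x). F (Some z, x)) \<and>
     smooth_map_CxM M A (UNIV \<times> M)
        (\<lambda>(w, x). F (if w = 0 then None else Some (inverse w), x))"

end

theory Submission
  imports Defs
begin

text \<open>For x \<in> M put p = \<sigma>'(\<infinity>, x).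
  Since \<sigma>(\<eta>, \<sigma>(\<xi>, x)) = \<sigma>(\<eta>\<xi>, x) and \<eta>\<xi> \<rightarrow> \<infinity> as \<xi> \<rightarrow> \<infinity>, p is a fixed point of the
  action, hence also \<sigma>'(0, p) = p. On the other hand \<sigma>(\<xi>, \<sigma>(1/\<xi>, x)) = x for every
  \<xi> \<noteq> 0, and letting \<xi> \<rightarrow> 0 gives \<sigma>'(0, p) = x. Thus every x \<in> M is a fixed point.\<close>

lemma isCont_eq_at_if_eventually_eq:
  fixes f g :: "'a::{perfect_space, t2_space} \<Rightarrow> 'b::t2_space"
  assumes "isCont f a" "isCont g a" "eventually (\<lambda>x. f x = g x) (at a)"
  shows "f a = g a"
proof (rule tendsto_unique[OF at_neq_bot])
  show "(f \<longlongrightarrow> f a) (at a)" using assms(1) by (simp add: isCont_def)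
  show "(f \<longlongrightarrow> g a) (at a)"
    using assms(2,3) by (simp add: isCont_def tendsto_cong)
qed

lemma eq_at_0_if_eq_off_0:
  fixes f g :: "complex \<Rightarrow> 'b::t2_space"
  assumes "continuous_on UNIV f" "continuous_on UNIV g" "\<And>w. w \<noteq> 0 \<Longrightarrow> f w = g w"
  shows "f 0 = g 0"
  using assms by (intro isCont_eq_at_if_eventually_eq)
    (auto simp: continuous_on_eq_continuous_at eventually_at_filter)

lemma continuous_on_compose_Pair:
  assumes "continuous_on (S \<times> T) G" "continuous_on U h" "continuous_on U k"
    and "h ` U \<subseteq> S" "k ` U \<subseteq> T"
  shows "continuous_on U (\<lambda>w. G (h w, k w))"
  using assms by (intro continuous_on_compose2[OF assms(1) continuous_on_Pair]) auto

lemma Cstar_action_trivial_if_extends_over_0_and_infinity: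
  fixes \<sigma> Gzero Ginf :: "complex \<times> 'm::t2_space \<Rightarrow> 'm"
  assumes \<sigma>_cont: "continuous_on ((- {0}) \<times> M) \<sigma>"
    and \<sigma>_M: "\<sigma> ` ((- {0}) \<times> M) \<subseteq> M"
    and \<sigma>_unit: "\<And>x. x \<in> M \<Longrightarrow> \<sigma> (1, x) = x"
    and \<sigma>_compose: "\<And>\<xi> \<eta> x. \<xi> \<noteq> 0 \<Longrightarrow> \<eta> \<noteq> 0 \<Longrightarrow> x \<in> M \<Longrightarrow> \<sigma> (\<xi>, \<sigma> (\<eta>, x)) = \<sigma> (\<xi> * \<eta>, x)"
    and Gzero_cont: "continuous_on (UNIV \<times> M) Gzero"
    and Ginf_cont: "continuous_on (UNIV \<times> M) Ginf"
    and Ginf_M: "Ginf ` (UNIV \<times> M) \<subseteq> M"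
    and Gzero_eq: "\<And>w x. w \<noteq> 0 \<Longrightarrow> x \<in> M \<Longrightarrow> Gzero (w, x) = \<sigma> (w, x)"
    and Ginf_eq: "\<And>w x. w \<noteq> 0 \<Longrightarrow> x \<in> M \<Longrightarrow> Ginf (w, x) = \<sigma> (inverse w, x)"
    and "\<xi> \<noteq> 0" "x \<in> M"
  shows "\<sigma> (\<xi>, x) = x"
proof -
  define p where "p = Ginf (0, x)"
  have orbit_M: "Ginf (w, x) \<in> M" for w
    using Ginf_M \<open>x \<in> M\<close> by auto
  then have "p \<in> M" by (simp add: p_def)
  have orbit_cont: "continuous_on UNIV (\<lambda>w. Ginf (w, x))"
    using \<open>x \<in> M\<close> by (auto intro!: continuous_on_compose_Pair[OF Ginf_cont] continuous_intros)
  have p_fixed: "\<sigma> (\<eta>, p) = p" if "\<eta> \<noteq> 0" for \<eta>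
  proof -
    have "continuous_on UNIV (\<lambda>w. \<sigma> (\<eta>, Ginf (w, x)))"
      using \<open>\<eta> \<noteq> 0\<close> orbit_M
      by (auto intro!: continuous_on_compose_Pair[OF \<sigma>_cont] orbit_cont continuous_intros)
    moreover have "continuous_on UNIV (\<lambda>w. Ginf (w / \<eta>, x))"
      using \<open>x \<in> M\<close> \<open>\<eta> \<noteq> 0\<close>
      by (auto intro!: continuous_on_compose_Pair[OF Ginf_cont] continuous_intros)
    moreover have "\<sigma> (\<eta>, Ginf (w, x)) = Ginf (w / \<eta>, x)" if "w \<noteq> 0" for w
      using that \<open>\<eta> \<noteq> 0\<close> \<open>x \<in> M\<close>
      by (simp add: Ginf_eq \<sigma>_compose divide_inverse mult.commute)
    ultimately have "\<sigma> (\<eta>, Ginf (0, x)) = Ginf (0 / \<eta>, x)"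
      by (rule eq_at_0_if_eq_off_0)
    then show ?thesis by (simp add: p_def)
  qed
  have "continuous_on UNIV (\<lambda>w. Gzero (w, p))"
    using \<open>p \<in> M\<close> by (auto intro!: continuous_on_compose_Pair[OF Gzero_cont] continuous_intros)
  then have "Gzero (0, p) = p"
    by (rule eq_at_0_if_eq_off_0[where g = "\<lambda>_. p", OF _ continuous_on_const])
      (simp add: Gzero_eq p_fixed \<open>p \<in> M\<close>)
  moreover have "Gzero (0, p) = x"
  proof -
    have "continuous_on UNIV (\<lambda>w. Gzero (w, Ginf (w, x)))"
      using orbit_M
      by (auto intro!: continuous_on_compose_Pair[OF Gzero_cont] orbit_cont continuous_intros)
    moreover have "Gzero (w, Ginf (w, x)) = x" if "w \<noteq> 0" for w
      using that \<open>x \<in> M\<close> \<sigma>_M by (simp add: Gzero_eq Ginf_eq \<sigma>_compose \<sigma>_unit image_subset_iff)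
    ultimately have "Gzero (0, Ginf (0, x)) = x"
      by (rule eq_at_0_if_eq_off_0[where g = "\<lambda>_. x", OF _ continuous_on_const])
    then show ?thesis by (simp add: p_def)
  qed
  ultimately show ?thesis
    using p_fixed \<open>\<xi> \<noteq> 0\<close> by simp
qed

theorem proposition9p1:
  fixes M :: "'m::{t2_space, second_countable_topology} set"
    and A :: "(('m \<Rightarrow> 'e::euclidean_space) \<times> 'm set) set"
    and \<sigma> :: "complex \<times> 'm \<Rightarrow> 'm"
  assumes "smooth_manifold M A"
    and "smooth_Cstar_action M A \<sigma>"
    and "\<exists>\<sigma>t :: complex option \<times> 'm \<Rightarrow> 'm. smooth_CP1_map M A \<sigma>t \<and>
           (\<forall>\<xi> x. \<xi> \<noteq> 0 \<longrightarrow> x \<in> M \<longrightarrow> \<sigma>t (Some \<xi>, x) = \<sigma> (\<xi>, x))"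
  shows "\<forall>\<xi> x. \<xi> \<noteq> 0 \<longrightarrow> x \<in> M \<longrightarrow> \<sigma> (\<xi>, x) = x"
proof (intro allI impI)
  fix \<xi> :: complex and x assume "\<xi> \<noteq> 0" "x \<in> M"
  obtain F where F: "smooth_CP1_map M A F"
    and F_ext: "\<And>\<xi> x. \<xi> \<noteq> 0 \<Longrightarrow> x \<in> M \<Longrightarrow> F (Some \<xi>, x) = \<sigma> (\<xi>, x)"
    using assms(3) by blast
  define Gzero where "Gzero = (\<lambda>(z, x). F (Some z, x))"
  define Ginf where "Ginf = (\<lambda>(w, x). F (if w = 0 then None else Some (inverse w), x))"
  have "continuous_on ((- {0}) \<times> M) \<sigma>" "\<sigma> ` ((- {0}) \<times> M) \<subseteq> M"
    and "\<And>x. x \<in> M \<Longrightarrow> \<sigma> (1, x) = x"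
    and "\<And>\<xi> \<eta> x. \<xi> \<noteq> 0 \<Longrightarrow> \<eta> \<noteq> 0 \<Longrightarrow> x \<in> M \<Longrightarrow> \<sigma> (\<xi>, \<sigma> (\<eta>, x)) = \<sigma> (\<xi> * \<eta>, x)"
    using assms(2) unfolding smooth_Cstar_action_def smooth_map_CxM_def by auto
  moreover have "continuous_on (UNIV \<times> M) Gzero" "continuous_on (UNIV \<times> M) Ginf"
    and "Ginf ` (UNIV \<times> M) \<subseteq> M"
    using F unfolding smooth_CP1_map_def smooth_map_CxM_def Gzero_def Ginf_def by auto
  moreover have "Gzero (w, y) = \<sigma> (w, y)" "Ginf (w, y) = \<sigma> (inverse w, y)"
    if "w \<noteq> 0" "y \<in> M" for w y
    using that by (simp_all add: Gzero_def Ginf_def F_ext)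
  ultimately show "\<sigma> (\<xi>, x) = x"
    using \<open>\<xi> \<noteq> 0\<close> \<open>x \<in> M\<close> by (rule Cstar_action_trivial_if_extends_over_0_and_infinity)
qed

end
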